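(* Let $n\ge1$ and $a_0,a_1,b_0,b_1\in R$. The sections $s_0=a_0(x^n,z^n)^T+a_1(y^n,w^n)^T$ and $s_1=b_0(x^n,z^n)^T+b_1(y^n,w^n)^T$ generate $\mathcal{P}_n$ if and only if there exist $U_x,V_x,U_w,V_w\in R$ with $$U_x(x^na_0+y^na_1)+V_x(x^nb_0+y^nb_1)+U_w(z^na_0+w^na_1)+V_w(z^nb_0+w^nb_1)=1.$$ Similarly, the sections $s_0=a_0(x^n,y^n)^T+a_1(z^n,w^n)^T$ and $s_1=b_0(x^n,y^n)^T+b_1(z^n,w^n)^T$ generate $\mathcal{Q}_n$ if and only if there exist $U_x,V_x,U_w,V_w\in R$ with $$U_x(x^na_0+z^na_1)+V_x(x^nb_0+z^nb_1)+U_w(y^na_0+w^na_1)+V_w(y^nb_0+w^nb_1)=1.$$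
   Context: Let $k$ be a field and $R=k[x,y,z,w]/(x+w-1,\,xw-yz)$. For $n\ge1$ let $\mathcal{P}_n\subseteq R^2$ be the $R$-submodule generated by $(x^n,z^n)^T$ and $(y^n,w^n)^T$, and $\mathcal{Q}_n\subseteq R^2$ the submodule generated by $(x^n,y^n)^T$ and $(z^n,w^n)^T$. "Generate" means the two sections generate the $R$-module. *)

theory Defs
  imports "HOL-Computational_Algebra.Polynomial"
begin

text \<open>The polynomial ring k[x,y,z,w] is modelled as iterated univariate polynomials
  over the field 'a; the ring R = k[x,y,z,w]/(x+w-1, xw-yz) is handled through
  representatives in k[x,y,z,w] together with the congruence modulo the ideal
  generated by x+w-1 and xw-yz.\<close>

type_synonym 'a kxyzw = "'a poly poly poly poly"

definition varX :: "'a::field kxyzw" where "varX = [:[:[:monom 1 1:]:]:]"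
definition varY :: "'a::field kxyzw" where "varY = [:[:monom 1 1:]:]"
definition varZ :: "'a::field kxyzw" where "varZ = [:monom 1 1:]"
definition varW :: "'a::field kxyzw" where "varW = monom 1 1"

definition in_ideal_R :: "'a::field kxyzw \<Rightarrow> bool" where
  "in_ideal_R f \<longleftrightarrow> (\<exists>c1 c2. f = c1 * (varX + varW - 1) + c2 * (varX * varW - varY * varZ))"

definition eqR :: "'a::field kxyzw \<Rightarrow> 'a kxyzw \<Rightarrow> bool" where
  "eqR f g \<longleftrightarrow> in_ideal_R (f - g)"

definition in_span2 :: "'a::field kxyzw \<times> 'a kxyzw \<Rightarrow> 'a kxyzw \<times> 'a kxyzw \<Rightarrow> 'a kxyzw \<times> 'a kxyzw \<Rightarrow> bool" where
  "in_span2 v u u' \<longleftrightarrow> (\<exists>c d. eqR (fst v) (c * fst u + d * fst u') \<and> eqR (snd v) (c * snd u + d * snd u'))"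

definition generates2 :: "'a::field kxyzw \<times> 'a kxyzw \<Rightarrow> 'a kxyzw \<times> 'a kxyzw \<Rightarrow> 'a kxyzw \<times> 'a kxyzw \<Rightarrow> 'a kxyzw \<times> 'a kxyzw \<Rightarrow> bool" where
  "generates2 s0 s1 e1 e2 \<longleftrightarrow> (\<forall>v. in_span2 v s0 s1 \<longleftrightarrow> in_span2 v e1 e2)"

end

theory Submission
  imports Defs
begin

text \<open>Write \<open>e = (p, r)\<close> and \<open>e' = (q, s)\<close> for the two given generators, where
  \<open>p, q, r, s\<close> are \<open>x\<^sup>n, y\<^sup>n, z\<^sup>n, w\<^sup>n\<close> in one of the two orders. Since \<open>s\<^sub>0\<close> and \<open>s\<^sub>1\<close>
  lie in the span of \<open>e, e'\<close>, they generate iff \<open>e\<close> and \<open>e'\<close> lie in their span. Two facts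
  about \<open>R\<close> drive the proof: the determinant \<open>ps - qr = (xw)\<^sup>n - (yz)\<^sup>n\<close> vanishes, and
  \<open>A x\<^sup>n + B w\<^sup>n = 1\<close> for some \<open>A, B\<close> because \<open>x + w = 1\<close>. If \<open>e\<close> and \<open>e'\<close> are
  combinations of \<open>s\<^sub>0, s\<^sub>1\<close>, the first coordinate of the one for \<open>e\<close> and the second
  coordinate of the one for \<open>e'\<close> express \<open>p\<close> and \<open>s\<close> through the coordinates of
  \<open>s\<^sub>0, s\<^sub>1\<close>, and \<open>A p + B s = 1\<close> gives the required identity. Conversely, the vanishing
  determinant gives \<open>p e' = q e\<close> and \<open>r e' = s e\<close>, hence \<open>p v = v\<^sub>1 e\<close> and
  \<open>r v = v\<^sub>2 e\<close> for every combination \<open>v\<close> of \<open>e, e'\<close>. Applied to \<open>v = s\<^sub>0, s\<^sub>1\<close>, this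
  shows that \<open>(U\<^sub>x p + U\<^sub>w r) s\<^sub>0 + (V\<^sub>x p + V\<^sub>w r) s\<^sub>1\<close> is the left-hand side of the identity
  times \<open>e\<close>, i.e. \<open>e\<close> itself; symmetrically for \<open>e'\<close>.\<close>

lemma in_ideal_R_add:
  assumes "in_ideal_R f" "in_ideal_R g"
  shows "in_ideal_R (f + g)"
proof -
  obtain c1 c2 d1 d2 where
    f: "f = c1 * (varX + varW - 1) + c2 * (varX * varW - varY * varZ)" and
    g: "g = d1 * (varX + varW - 1) + d2 * (varX * varW - varY * varZ)"
    using assms unfolding in_ideal_R_def by blast
  show ?thesis
    unfolding in_ideal_R_def f g
    by (rule exI[of _ "c1 + d1"], rule exI[of _ "c2 + d2"]) (simp add: algebra_simps)
qed

lemma in_ideal_R_mult: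
  assumes "in_ideal_R f"
  shows "in_ideal_R (h * f)"
proof -
  obtain c1 c2 where f: "f = c1 * (varX + varW - 1) + c2 * (varX * varW - varY * varZ)"
    using assms unfolding in_ideal_R_def by blast
  show ?thesis
    unfolding in_ideal_R_def f
    by (rule exI[of _ "h * c1"], rule exI[of _ "h * c2"]) (simp add: algebra_simps)
qed

lemma in_ideal_R_lincomb:
  "in_ideal_R f \<Longrightarrow> in_ideal_R g \<Longrightarrow> in_ideal_R (h * f + k * g)"
  by (simp add: in_ideal_R_add in_ideal_R_mult)

lemma eqR_refl: "eqR f f"
  unfolding eqR_def in_ideal_R_def by (auto intro!: exI[of _ 0])

lemma eqR_sym: "eqR f g \<Longrightarrow> eqR g f"
  unfolding eqR_def using in_ideal_R_mult[of "f - g" "-1"] by simp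

lemma eqR_trans: "eqR f g \<Longrightarrow> eqR g h \<Longrightarrow> eqR f h"
  unfolding eqR_def using in_ideal_R_add[of "f - g" "g - h"] by simp

lemma eqR_add: "eqR f g \<Longrightarrow> eqR f' g' \<Longrightarrow> eqR (f + f') (g + g')"
  unfolding eqR_def using in_ideal_R_add[of "f - g" "f' - g'"] by (simp add: algebra_simps)

lemma eqR_mult: "eqR f g \<Longrightarrow> eqR f' g' \<Longrightarrow> eqR (f * f') (g * g')"
  unfolding eqR_def using in_ideal_R_lincomb[of "f - g" "f' - g'" f' g]
  by (simp add: algebra_simps)

lemma eqR_power: "eqR f g \<Longrightarrow> eqR (f ^ n) (g ^ n)"
  by (induction n) (simp_all add: eqR_refl eqR_mult)

lemma eqR_varW_one_minus_varX: "eqR varW (1 - varX)"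
  unfolding eqR_def in_ideal_R_def by (rule exI[of _ 1], rule exI[of _ 0]) simp

lemma eqR_varXW_varYZ: "eqR (varX * varW) (varY * varZ)"
  unfolding eqR_def in_ideal_R_def by (rule exI[of _ 0], rule exI[of _ 1]) simp

lemma comaximal_power_right:
  fixes a b :: "'r::comm_ring_1"
  assumes "A * a + B * b = 1"
  shows "\<exists>A' B'. A' * a + B' * b ^ n = 1"
proof (induction n)
  case 0
  show ?case by (rule exI[of _ 0], rule exI[of _ 1]) simp
next
  case (Suc n)
  then obtain C D where CD: "C * a + D * b ^ n = 1" by blast
  have "(A * C * a + A * D * b ^ n + B * b * C) * a + (B * D) * b ^ Suc n
      = (A * a + B * b) * (C * a + D * b ^ n)"
    by (simp add: algebra_simps)
  with assms CD show ?case by (metis mult_1)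
qed

lemma comaximal_powers:
  fixes a b :: "'r::comm_ring_1"
  assumes "A * a + B * b = 1"
  shows "\<exists>A' B'. A' * a ^ m + B' * b ^ n = 1"
proof -
  obtain C D where "C * a + D * b ^ n = 1"
    using comaximal_power_right[OF assms] by blast
  then have "D * b ^ n + C * a = 1" by (simp add: add.commute)
  then obtain D' C' where "D' * b ^ n + C' * a ^ m = 1"
    using comaximal_power_right by blast
  then show ?thesis by (metis add.commute)
qed

lemma varX_varW_powers_comaximal: "\<exists>A B. eqR (A * varX ^ n + B * varW ^ n) 1"
proof -
  obtain A B where AB: "A * varX ^ n + B * (1 - varX) ^ n = (1 :: 'a::field kxyzw)"
    using comaximal_powers[of 1 varX 1 "1 - varX" n n] by auto
  have "eqR (A * varX ^ n + B * varW ^ n) (A * varX ^ n + B * (1 - varX) ^ n)"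
    by (intro eqR_add eqR_mult eqR_refl eqR_power eqR_varW_one_minus_varX)
  then show ?thesis unfolding AB by blast
qed

lemma eqR_varXW_varYZ_power: "eqR (varX ^ n * varW ^ n) (varY ^ n * varZ ^ n)"
  using eqR_power[OF eqR_varXW_varYZ, of n] by (simp add: power_mult_distrib)

lemma in_span2_lincomb: "in_span2 (c * fst u + d * fst u', c * snd u + d * snd u') u u'"
  unfolding in_span2_def by (auto intro: eqR_refl)

lemma in_span2_left: "in_span2 u u u'"
  using in_span2_lincomb[of 1 u 0 u'] by simp

lemma in_span2_right: "in_span2 u' u u'"
  using in_span2_lincomb[of 0 u 1 u'] by simp

lemma in_span2_trans:
  assumes "in_span2 u e e'" "in_span2 u' e e'" "in_span2 v u u'"
  shows "in_span2 v e e'"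
proof -
  obtain c d where "eqR (fst u) (c * fst e + d * fst e')" "eqR (snd u) (c * snd e + d * snd e')"
    using assms(1) unfolding in_span2_def by blast
  moreover obtain c' d' where
    "eqR (fst u') (c' * fst e + d' * fst e')" "eqR (snd u') (c' * snd e + d' * snd e')"
    using assms(2) unfolding in_span2_def by blast
  moreover obtain h k where "eqR (fst v) (h * fst u + k * fst u')" "eqR (snd v) (h * snd u + k * snd u')"
    using assms(3) unfolding in_span2_def by blast
  ultimately have
    "eqR (fst v) (h * (c * fst e + d * fst e') + k * (c' * fst e + d' * fst e'))"
    "eqR (snd v) (h * (c * snd e + d * snd e') + k * (c' * snd e + d' * snd e'))"
    by (meson eqR_add eqR_mult eqR_refl eqR_trans)+
  then show ?thesis
    unfolding in_span2_def
    by (intro exI[of _ "h * c + k * c'"] exI[of _ "h * d + k * d'"]) (simp add: algebra_simps)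
qed

lemma generates2_iff_generators_in_span:
  assumes "in_span2 s0 e e'" "in_span2 s1 e e'"
  shows "generates2 s0 s1 e e' \<longleftrightarrow> in_span2 e s0 s1 \<and> in_span2 e' s0 s1"
  using assms in_span2_left in_span2_right in_span2_trans unfolding generates2_def by meson

lemma unit_combination_if_generators_in_span:
  assumes "in_span2 (p, r) s0 s1" "in_span2 (q, s) s0 s1" "eqR (A * p + B * s) 1"
  shows "\<exists>U V U' V'. eqR (U * fst s0 + V * fst s1 + U' * snd s0 + V' * snd s1) 1"
proof -
  obtain c d where "eqR p (c * fst s0 + d * fst s1)"
    using assms(1) unfolding in_span2_def by auto
  moreover obtain c' d' where "eqR s (c' * snd s0 + d' * snd s1)"
    using assms(2) unfolding in_span2_def by auto
  ultimately have "eqR (A * p + B * s) (A * (c * fst s0 + d * fst s1) + B * (c' * snd s0 + d' * snd s1))"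
    by (intro eqR_add eqR_mult eqR_refl)
  then have unit: "eqR (A * (c * fst s0 + d * fst s1) + B * (c' * snd s0 + d' * snd s1)) 1"
    using assms(3) eqR_sym eqR_trans by blast
  show ?thesis
    by (rule exI[of _ "A * c"], rule exI[of _ "A * d"], rule exI[of _ "B * c'"], rule exI[of _ "B * d'"])
      (use unit in \<open>simp add: algebra_simps\<close>)
qed

lemma first_generator_in_span_if_unit_combination:
  assumes det: "eqR (p * s) (q * r)"
    and unit: "eqR (Ux * (p * a0 + q * a1) + Vx * (p * b0 + q * b1)
                    + Uw * (r * a0 + s * a1) + Vw * (r * b0 + s * b1)) 1"
  shows "in_span2 (p, r) (a0 * p + a1 * q, a0 * r + a1 * s) (b0 * p + b1 * q, b0 * r + b1 * s)"
proof -
  have "in_ideal_R (p - ((Ux * p + Uw * r) * (a0 * p + a1 * q) + (Vx * p + Vw * r) * (b0 * p + b1 * q)))"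
    using in_ideal_R_lincomb[OF unit[unfolded eqR_def] det[unfolded eqR_def], of "- p" "a1 * Uw + b1 * Vw"]
    by (simp add: algebra_simps)
  moreover have "in_ideal_R (r - ((Ux * p + Uw * r) * (a0 * r + a1 * s) + (Vx * p + Vw * r) * (b0 * r + b1 * s)))"
    using in_ideal_R_lincomb[OF unit[unfolded eqR_def] det[unfolded eqR_def], of "- r" "- (a1 * Ux + b1 * Vx)"]
    by (simp add: algebra_simps)
  ultimately show ?thesis
    unfolding in_span2_def eqR_def by auto
qed

lemma generates2_iff_unit_combination:
  assumes det: "eqR (p * s) (q * r)" and AB: "eqR (A * p + B * s) 1"
  shows "generates2 (a0 * p + a1 * q, a0 * r + a1 * s) (b0 * p + b1 * q, b0 * r + b1 * s) (p, r) (q, s)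
    \<longleftrightarrow> (\<exists>Ux Vx Uw Vw. eqR (Ux * (p * a0 + q * a1) + Vx * (p * b0 + q * b1)
                              + Uw * (r * a0 + s * a1) + Vw * (r * b0 + s * b1)) 1)"
    (is "generates2 ?s0 ?s1 _ _ \<longleftrightarrow> ?unit")
proof -
  have "in_span2 ?s0 (p, r) (q, s)" "in_span2 ?s1 (p, r) (q, s)"
    using in_span2_lincomb[of _ "(p, r)" _ "(q, s)"] by simp_all
  then have "generates2 ?s0 ?s1 (p, r) (q, s) \<longleftrightarrow> in_span2 (p, r) ?s0 ?s1 \<and> in_span2 (q, s) ?s0 ?s1"
    by (rule generates2_iff_generators_in_span)
  also have "\<dots> \<longleftrightarrow> ?unit"
  proof
    assume "in_span2 (p, r) ?s0 ?s1 \<and> in_span2 (q, s) ?s0 ?s1"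
    then have "\<exists>U V U' V'. eqR (U * fst ?s0 + V * fst ?s1 + U' * snd ?s0 + V' * snd ?s1) 1"
      using unit_combination_if_generators_in_span[OF _ _ AB] by blast
    then show ?unit
      by (simp add: mult.commute)
  next
    assume ?unit
    then obtain Ux Vx Uw Vw where unit: "eqR (Ux * (p * a0 + q * a1) + Vx * (p * b0 + q * b1)
                              + Uw * (r * a0 + s * a1) + Vw * (r * b0 + s * b1)) 1"
      by blast
    have "in_span2 (p, r) ?s0 ?s1"
      by (rule first_generator_in_span_if_unit_combination[OF det unit])
    moreover have "in_span2 (q, s) ?s0 ?s1"
      \<comment> \<open>the previous case with \<open>(p, r) \<leftrightarrow> (q, s)\<close>, \<open>a\<^sub>0 \<leftrightarrow> a\<^sub>1\<close>, \<open>b\<^sub>0 \<leftrightarrow> b\<^sub>1\<close>\<close>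
      using first_generator_in_span_if_unit_combination[OF eqR_sym[OF det], of Ux a1 a0 Vx b1 b0 Uw Vw]
        unit by (simp add: add.commute)
    ultimately show "in_span2 (p, r) ?s0 ?s1 \<and> in_span2 (q, s) ?s0 ?s1" ..
  qed
  finally show ?thesis .
qed

theorem proposition2p26:
  fixes n :: nat and a0 a1 b0 b1 :: "'a::field kxyzw"
  assumes "n \<ge> 1"
  shows "(generates2
            (a0 * varX ^ n + a1 * varY ^ n, a0 * varZ ^ n + a1 * varW ^ n)
            (b0 * varX ^ n + b1 * varY ^ n, b0 * varZ ^ n + b1 * varW ^ n)
            (varX ^ n, varZ ^ n) (varY ^ n, varW ^ n)
         \<longleftrightarrow> (\<exists>Ux Vx Uw Vw. eqR
                (Ux * (varX ^ n * a0 + varY ^ n * a1) + Vx * (varX ^ n * b0 + varY ^ n * b1)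
                 + Uw * (varZ ^ n * a0 + varW ^ n * a1) + Vw * (varZ ^ n * b0 + varW ^ n * b1)) 1))
       \<and> (generates2
            (a0 * varX ^ n + a1 * varZ ^ n, a0 * varY ^ n + a1 * varW ^ n)
            (b0 * varX ^ n + b1 * varZ ^ n, b0 * varY ^ n + b1 * varW ^ n)
            (varX ^ n, varY ^ n) (varZ ^ n, varW ^ n)
         \<longleftrightarrow> (\<exists>Ux Vx Uw Vw. eqR
                (Ux * (varX ^ n * a0 + varZ ^ n * a1) + Vx * (varX ^ n * b0 + varZ ^ n * b1)
                 + Uw * (varY ^ n * a0 + varW ^ n * a1) + Vw * (varY ^ n * b0 + varW ^ n * b1)) 1))"
proof -
  obtain A B where AB: "eqR (A * varX ^ n + B * varW ^ n) (1 :: 'a kxyzw)"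
    using varX_varW_powers_comaximal by blast
  have det: "eqR (varX ^ n * varW ^ n) (varY ^ n * varZ ^ n :: 'a kxyzw)"
    by (rule eqR_varXW_varYZ_power)
  then have det': "eqR (varX ^ n * varW ^ n) (varZ ^ n * varY ^ n :: 'a kxyzw)"
    by (simp add: mult.commute)
  show ?thesis
    by (intro conjI generates2_iff_unit_combination[OF det AB] generates2_iff_unit_combination[OF det' AB])
qed

end
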